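(* Let $n\ge 2$, $m\in\mathbb{Z}$, and $1\le k\le n-1$. Then the closure $B(2n,2n-2+2mn,2k-1)$ of the braid $(\sigma_1\sigma_2\cdots\sigma_{2k-1})(\sigma_1\sigma_2\cdots\sigma_{2n-1})^{2n-2+2mn}$ on $2n$ strands is a knot.
   Context: $\sigma_i$ are the standard Artin generators of the braid group ($\sigma_i$ a right-handed half twist of strands $i,i+1$), braids composed right to left. *)

theory Defs
  imports Main
begin

text \<open>Braid words on strands 1..N: a letter is a nonzero integer a, standing for
 sigma_|a| if a > 0 and sigma_|a| inverse if a < 0.  A word [a1,...,ar] denotes the
 product a1 a2 ... ar (composed right to left).\<close>

type_synonym braid_word = "int list"

definition valid_word :: "nat \<Rightarrow> braid_word \<Rightarrow> bool" where
  "valid_word N w \<longleftrightarrow> (\<forall>a\<in>set w. a \<noteq> 0 \<and> nat \<bar>a\<bar> \<le> N - 1)"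

definition gen_word :: "nat \<Rightarrow> nat \<Rightarrow> braid_word" where
  "gen_word i j = map int [i..<j+1]"

definition braid_inv :: "braid_word \<Rightarrow> braid_word" where
  "braid_inv w = rev (map uminus w)"

definition braid_pow :: "braid_word \<Rightarrow> int \<Rightarrow> braid_word" where
  "braid_pow w e = (if 0 \<le> e then concat (replicate (nat e) w)
                    else concat (replicate (nat (- e)) (braid_inv w)))"

text \<open>Underlying permutation of strand positions: sigma_i^{\<pm>1} swaps positions i, i+1.\<close>
definition strand_swap :: "nat \<Rightarrow> nat \<Rightarrow> nat" where
  "strand_swap i x = (if x = i then i + 1 else if x = i + 1 then i else x)"

definition braid_perm :: "braid_word \<Rightarrow> nat \<Rightarrow> nat" where
  "braid_perm w = foldr (\<lambda>a p. strand_swap (nat \<bar>a\<bar>) \<circ> p) w id"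

text \<open>The closure of a braid on N strands has one component per cycle of its
 permutation; it is a knot iff that permutation acts transitively on {1..N}.\<close>
definition closure_is_knot :: "nat \<Rightarrow> braid_word \<Rightarrow> bool" where
  "closure_is_knot N w \<longleftrightarrow> valid_word N w \<and>
     (\<forall>i\<in>{1..N}. \<forall>j\<in>{1..N}. \<exists>k::nat. (braid_perm w ^^ k) i = j)"

end

theory Submission
  imports Defs
begin

text \<open>The word sigma_1 ... sigma_(N-1) permutes positions by the cyclic
  shift x \<mapsto> x + 1 (mod N), so its e-th power is the shift by e; for N = 2n and
  e = 2n - 2 + 2mn this is x \<mapsto> x - 2 (mod 2n), whatever m is.  Following it by the
  2k-cycle of sigma_1 ... sigma_(2k-1) gives a permutation whose orbit through 1 is
  1, 2n-1, 2n-3, ..., 2k+1, 2k, 2k-1, ..., 2, 2n, 2n-2, ..., 2k+2 and hence exhausts all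
  2n positions: the closure has a single component.\<close>

lemma braid_perm_Nil [simp]: "braid_perm [] = id"
  by (simp add: braid_perm_def)

lemma braid_perm_Cons [simp]: "braid_perm (a # w) = strand_swap (nat \<bar>a\<bar>) \<circ> braid_perm w"
  by (simp add: braid_perm_def)

lemma braid_perm_append: "braid_perm (v @ w) = braid_perm v \<circ> braid_perm w"
  by (induction v) (simp_all add: comp_assoc)

lemma braid_perm_concat_replicate: "braid_perm (concat (replicate t w)) = braid_perm w ^^ t"
  by (induction t) (simp_all add: braid_perm_append)

lemma strand_swap_involution: "strand_swap i \<circ> strand_swap i = id"
  by (auto simp: strand_swap_def)

lemma braid_perm_braid_inv: "braid_perm (braid_inv w) \<circ> braid_perm w = id"
proof (induction w)
  case Nil
  then show ?case by (simp add: braid_inv_def)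
next
  case (Cons a w)
  have "braid_perm (braid_inv (a # w)) = braid_perm (braid_inv w) \<circ> strand_swap (nat \<bar>a\<bar>)"
    by (simp add: braid_inv_def braid_perm_append)
  then have "braid_perm (braid_inv (a # w)) \<circ> braid_perm (a # w)
      = braid_perm (braid_inv w) \<circ> (strand_swap (nat \<bar>a\<bar>) \<circ> strand_swap (nat \<bar>a\<bar>)) \<circ> braid_perm w"
    by (simp only: braid_perm_Cons comp_assoc)
  also have "\<dots> = id"
    by (simp only: strand_swap_involution comp_id Cons.IH)
  finally show ?case .
qed

lemma braid_perm_gen_word:
  "braid_perm (gen_word 1 j) x = (if 1 \<le> x \<and> x \<le> j then x + 1 else if x = j + 1 then 1 else x)"
proof (induction j arbitrary: x)
  case 0
  then show ?case by (simp add: gen_word_def strand_swap_def)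
next
  case (Suc j)
  have "gen_word 1 (Suc j) = gen_word 1 j @ [int (Suc j)]"
    by (simp add: gen_word_def)
  then have "braid_perm (gen_word 1 (Suc j)) = braid_perm (gen_word 1 j) \<circ> strand_swap (Suc j)"
    by (simp only: braid_perm_append braid_perm_Cons braid_perm_Nil abs_of_nat nat_int comp_id)
  then show ?case using Suc by (auto simp: strand_swap_def)
qed

definition cyclic_shift :: "nat \<Rightarrow> int \<Rightarrow> nat \<Rightarrow> nat" where
  "cyclic_shift N s x = nat ((int x - 1 + s) mod int N) + 1"

lemma cyclic_shift_in_range:
  assumes "0 < N"
  shows "cyclic_shift N s x \<in> {1..N}"
proof -
  have "0 \<le> (int x - 1 + s) mod int N" "(int x - 1 + s) mod int N < int N"
    using assms by simp_all
  then show ?thesis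
    by (simp add: cyclic_shift_def Suc_le_eq nat_less_iff)
qed

lemma cyclic_shift_cyclic_shift:
  assumes "0 < N"
  shows "cyclic_shift N a (cyclic_shift N b x) = cyclic_shift N (a + b) x"
proof -
  have "int (cyclic_shift N b x) - 1 = (int x - 1 + b) mod int N"
    using assms by (simp add: cyclic_shift_def)
  then show ?thesis
    by (simp add: cyclic_shift_def mod_add_right_eq algebra_simps)
qed

lemma cyclic_shift_0: "x \<in> {1..N} \<Longrightarrow> cyclic_shift N 0 x = x"
  by (auto simp: cyclic_shift_def)

lemma cyclic_shift_cong: "a mod int N = b mod int N \<Longrightarrow> cyclic_shift N a = cyclic_shift N b"
  unfolding cyclic_shift_def by (metis mod_add_cong)

lemma cyclic_shift_minus_two:
  assumes "2 \<le> N" "x \<in> {1..N}"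
  shows "cyclic_shift N (-2) x = (if x = 1 then N - 1 else if x = 2 then N else x - 2)"
proof -
  consider "x = 1" | "x = 2" | "3 \<le> x" using assms(2) by fastforce
  then show ?thesis
  proof cases
    case 1
    have "(-2) mod int N = (int N - 2) mod int N"
      using mod_add_self2[of "-2" "int N"] by simp
    also have "\<dots> = int N - 2"
      by (rule mod_pos_pos_trivial) (use assms(1) in auto)
    finally have "(-2) mod int N = int N - 2" .
    then show ?thesis using 1 assms(1) by (simp add: cyclic_shift_def)
  next
    case 2
    have "(-1) mod int N = int N - 1" using assms(1) by (simp add: zmod_minus1)
    then show ?thesis using 2 assms(1) by (simp add: cyclic_shift_def)
  next
    case 3
    then show ?thesis using assms(2) by (simp add: cyclic_shift_def mod_pos_pos_trivial)
  qed
qed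

lemma funpow_cyclic_shift:
  assumes "0 < N" and p: "\<And>y. y \<in> {1..N} \<Longrightarrow> p y = cyclic_shift N a y" and "x \<in> {1..N}"
  shows "(p ^^ t) x = cyclic_shift N (int t * a) x"
proof (induction t)
  case 0
  then show ?case using assms(3) by (simp add: cyclic_shift_0)
next
  case (Suc t)
  have "(p ^^ Suc t) x = p (cyclic_shift N (int t * a) x)"
    by (simp add: Suc.IH)
  also have "\<dots> = cyclic_shift N a (cyclic_shift N (int t * a) x)"
    using p cyclic_shift_in_range[OF \<open>0 < N\<close>] by blast
  also have "\<dots> = cyclic_shift N (int (Suc t) * a) x"
    using cyclic_shift_cyclic_shift[OF \<open>0 < N\<close>] by (simp add: algebra_simps)
  finally show ?case .
qed

lemma braid_perm_braid_pow_cyclic_shift: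
  assumes "0 < N" and w: "\<And>y. y \<in> {1..N} \<Longrightarrow> braid_perm w y = cyclic_shift N 1 y"
    and "x \<in> {1..N}"
  shows "braid_perm (braid_pow w e) x = cyclic_shift N e x"
proof (cases "0 \<le> e")
  case True
  then show ?thesis
    using funpow_cyclic_shift[OF \<open>0 < N\<close> w \<open>x \<in> {1..N}\<close>, of "nat e"]
    by (simp add: braid_pow_def braid_perm_concat_replicate)
next
  case False
  have inv: "braid_perm (braid_inv w) y = cyclic_shift N (-1) y" if "y \<in> {1..N}" for y
  proof -
    have "braid_perm w (cyclic_shift N (-1) y) = cyclic_shift N 1 (cyclic_shift N (-1) y)"
      using w cyclic_shift_in_range[OF \<open>0 < N\<close>] by blast
    also have "\<dots> = y"
      using cyclic_shift_cyclic_shift[OF \<open>0 < N\<close>] cyclic_shift_0[OF that] by simp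
    finally show ?thesis
      using braid_perm_braid_inv[of w] by (metis comp_apply id_apply)
  qed
  show ?thesis
    using False funpow_cyclic_shift[OF \<open>0 < N\<close> inv \<open>x \<in> {1..N}\<close>, of "nat (- e)"]
    by (simp add: braid_pow_def braid_perm_concat_replicate)
qed

lemma braid_perm_gen_word_cyclic_shift:
  assumes "x \<in> {1..Suc j}"
  shows "braid_perm (gen_word 1 j) x = cyclic_shift (Suc j) 1 x"
proof (cases "x = Suc j")
  case True
  then show ?thesis
    unfolding braid_perm_gen_word cyclic_shift_def by (simp add: add.commute)
next
  case False
  then have "int x mod int (Suc j) = int x"
    using assms by (simp add: mod_pos_pos_trivial)
  then show ?thesis
    using False assms unfolding braid_perm_gen_word cyclic_shift_def by simp
qed

lemma funpow_connects_cyclic_enumeration: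
  assumes step: "\<And>i. i < N \<Longrightarrow> f (\<sigma> i) = \<sigma> (Suc i mod N)"
    and "x \<in> \<sigma> ` {..<N}" "y \<in> \<sigma> ` {..<N}"
  shows "\<exists>t. (f ^^ t) x = y"
proof -
  have iter: "(f ^^ t) (\<sigma> i) = \<sigma> ((i + t) mod N)" if "i < N" for i t
  proof (induction t)
    case 0
    then show ?case using that by simp
  next
    case (Suc t)
    then show ?case
      using step[of "(i + t) mod N"] that by (simp add: mod_Suc_eq)
  qed
  obtain i j where "i < N" "j < N" "x = \<sigma> i" "y = \<sigma> j"
    using assms(2,3) by blast
  then have "(f ^^ (N - i + j)) x = y"
    using iter[of i "N - i + j"] by simp
  then show ?thesis ..
qed

definition knot_perm :: "nat \<Rightarrow> nat \<Rightarrow> nat \<Rightarrow> nat" where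
  "knot_perm n k x =
     (if x = 1 then 2 * n - 1 else if x = 2 then 2 * n
      else if x \<le> 2 * k + 1 then x - 1 else if x = 2 * k + 2 then 1 else x - 2)"

text \<open>The i-th point of the orbit 1, 2n-1, ..., 2k+1, 2k, ..., 2, 2n, ..., 2k+2 of knot_perm.\<close>
definition knot_orbit :: "nat \<Rightarrow> nat \<Rightarrow> nat \<Rightarrow> nat" where
  "knot_orbit n k i =
     (if i = 0 then 1 else if i \<le> n - k then 2 * n + 1 - 2 * i
      else if i < n + k then n + k + 1 - i else 4 * n + 2 * k - 2 * i)"

lemma knot_orbit_in_range:
  assumes "k < n" "i < 2 * n"
  shows "knot_orbit n k i \<in> {1..2 * n}"
  using assms unfolding knot_orbit_def by (simp split: if_split) linarith

lemma knot_perm_knot_orbit: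
  assumes "1 \<le> k" "k < n" "i < 2 * n"
  shows "knot_perm n k (knot_orbit n k i) = knot_orbit n k (Suc i mod (2 * n))"
proof (cases "Suc i = 2 * n")
  case True
  then obtain j where "n = Suc j" "i = 2 * j + 1"
    using that[of "n - 1"] by linarith
  then show ?thesis using assms(1,2) by (simp add: knot_perm_def knot_orbit_def)
next
  case False
  then have next_i: "Suc i mod (2 * n) = Suc i" using assms(3) by simp
  consider "i = 0" | "1 \<le> i" "i < n - k" | "i = n - k" | "n - k < i" "Suc i < n + k"
    | "Suc i = n + k" | "n + k \<le> i"
    by linarith
  then show ?thesis
  proof cases
    case 1
    then show ?thesis using assms(1,2) by (simp add: next_i knot_perm_def knot_orbit_def)
  next
    case 2
    then obtain r where "n = i + k + r + 1"
      using that[of "n - k - i - 1"] by linarith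
    then show ?thesis using 2 assms(1) by (simp add: next_i knot_perm_def knot_orbit_def)
  next
    case 3
    then have "n = i + k" "1 \<le> i" using assms(2) by linarith+
    then show ?thesis using assms(1) by (simp add: next_i knot_perm_def knot_orbit_def)
  next
    case 4
    then obtain a j where "n = a + k" "i = a + j" "1 \<le> j" "Suc j < 2 * k"
      using assms(2) that[of "n - k" "i - (n - k)"] by linarith
    then show ?thesis by (simp add: next_i knot_perm_def knot_orbit_def) linarith
  next
    case 5
    then obtain a where "n = a + k + 1" "i = a + 2 * k"
      using assms(2) that[of "n - k - 1"] by linarith
    then show ?thesis using assms(1) by (simp add: next_i knot_perm_def knot_orbit_def)
  next
    case 6
    then obtain j r where "i = n + k + j" "n = k + j + r + 2"
      using False assms(3) that[of "i - n - k" "n + n - i - 2"] by linarith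
    then show ?thesis using assms(1) by (simp add: next_i knot_perm_def knot_orbit_def)
  qed
qed

lemma knot_orbit_surj:
  assumes "1 \<le> k" "k < n" "x \<in> {1..2 * n}"
  shows "x \<in> knot_orbit n k ` {..<2 * n}"
proof -
  consider "x = 1" | b where "x = 2 * b + 1" "k \<le> b" "b < n" | "2 \<le> x" "x \<le> 2 * k"
    | b where "x = 2 * b" "k < b" "b \<le> n"
    using assms(1,2) assms(3)[unfolded atLeastAtMost_iff] by atomize_elim presburger
  then obtain i where "i < 2 * n" "knot_orbit n k i = x"
  proof cases
    case 1
    then show ?thesis using that[of 0] assms by (simp add: knot_orbit_def)
  next
    case (2 b)
    define i where "i = n - b"
    have "i \<noteq> 0" "i \<le> n - k" "2 * n + 1 - 2 * i = x" "i < 2 * n"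
      using 2 assms unfolding i_def by linarith+
    then show ?thesis using that[of i] by (simp add: knot_orbit_def)
  next
    case 3
    define i where "i = n + k + 1 - x"
    have "i \<noteq> 0" "\<not> i \<le> n - k" "i < n + k" "n + k + 1 - i = x" "i < 2 * n"
      using 3 assms unfolding i_def by linarith+
    then show ?thesis using that[of i] by (simp add: knot_orbit_def)
  next
    case (4 b)
    define i where "i = 2 * n + k - b"
    have "i \<noteq> 0" "\<not> i \<le> n - k" "\<not> i < n + k" "4 * n + 2 * k - 2 * i = x" "i < 2 * n"
      using 4 assms unfolding i_def by linarith+
    then show ?thesis using that[of i] by (simp add: knot_orbit_def)
  qed
  then show ?thesis by blast
qed

lemma knot_perm_transitive:
  assumes "1 \<le> k" "k < n" and f: "\<And>x. x \<in> {1..2 * n} \<Longrightarrow> f x = knot_perm n k x"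
    and "x \<in> {1..2 * n}" "y \<in> {1..2 * n}"
  shows "\<exists>t. (f ^^ t) x = y"
proof (rule funpow_connects_cyclic_enumeration)
  fix i assume "i < 2 * n"
  then show "f (knot_orbit n k i) = knot_orbit n k (Suc i mod (2 * n))"
    using f knot_orbit_in_range knot_perm_knot_orbit assms(1,2) by simp
qed (use knot_orbit_surj assms in blast)+

lemma knot_perm_eq_cycle_after_shift:
  assumes "1 \<le> k" "k < n" "x \<in> {1..2 * n}"
  shows "knot_perm n k x = braid_perm (gen_word 1 (2 * k - 1)) (cyclic_shift (2 * n) (-2) x)"
proof -
  consider "x = 1" | "x = 2" | "3 \<le> x" "x \<le> 2 * k + 1" | "x = 2 * k + 2" | "2 * k + 2 < x"
    using assms(3) by fastforce
  then have "knot_perm n k x =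
    (let y = if x = 1 then 2 * n - 1 else if x = 2 then 2 * n else x - 2 in
       if 1 \<le> y \<and> y \<le> 2 * k - 1 then y + 1 else if y = 2 * k - 1 + 1 then 1 else y)"
  proof cases
    case 1
    moreover have "\<not> 2 * n - 1 \<le> 2 * k - 1" "2 * n - 1 \<noteq> 2 * k - 1 + 1"
      using assms(1,2) by linarith+
    ultimately show ?thesis by (simp add: knot_perm_def Let_def)
  next
    case 3
    moreover have "1 \<le> x - 2" "x - 2 \<le> 2 * k - 1" "x - 2 + 1 = x - 1"
      using 3 by linarith+
    ultimately show ?thesis by (simp add: knot_perm_def Let_def)
  next
    case 5
    moreover have "\<not> x - 2 \<le> 2 * k - 1" "x - 2 \<noteq> 2 * k - 1 + 1"
      using 5 assms(1) by linarith+
    ultimately show ?thesis by (simp add: knot_perm_def Let_def)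
  qed (use assms(1,2) in \<open>simp_all add: knot_perm_def Let_def\<close>)
  then show ?thesis
    using cyclic_shift_minus_two[of "2 * n" x] assms
    by (simp only: braid_perm_gen_word Let_def)
qed

lemma braid_perm_knot_word:
  assumes "1 \<le> k" "k < n" "e mod int (2 * n) = -2 mod int (2 * n)" "x \<in> {1..2 * n}"
  shows "braid_perm (gen_word 1 (2 * k - 1) @ braid_pow (gen_word 1 (2 * n - 1)) e) x
    = knot_perm n k x"
proof -
  have N: "Suc (2 * n - 1) = 2 * n" using assms(2) by simp
  have "braid_perm (braid_pow (gen_word 1 (2 * n - 1)) e) x = cyclic_shift (2 * n) e x"
    using braid_perm_braid_pow_cyclic_shift braid_perm_gen_word_cyclic_shift[of _ "2 * n - 1"]
      assms(2,4) unfolding N by simp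
  also have "\<dots> = cyclic_shift (2 * n) (-2) x"
    using cyclic_shift_cong[OF assms(3)] by simp
  finally show ?thesis
    using knot_perm_eq_cycle_after_shift[OF assms(1,2,4)] by (simp add: braid_perm_append)
qed

theorem mainTheorem4:
  fixes n k :: nat and m :: int
  assumes "n \<ge> 2" and "1 \<le> k" and "k \<le> n - 1"
  shows "closure_is_knot (2 * n)
           (gen_word 1 (2 * k - 1) @
            braid_pow (gen_word 1 (2 * n - 1)) (2 * int n - 2 + 2 * m * int n))"
proof -
  let ?e = "2 * int n - 2 + 2 * m * int n"
  have "k < n" using assms by linarith
  have "?e = -2 + int (2 * n) * (m + 1)" by (simp add: algebra_simps)
  then have e: "?e mod int (2 * n) = -2 mod int (2 * n)" by (metis mod_mult_self2)
  have "\<exists>t. (braid_perm (gen_word 1 (2 * k - 1) @ braid_pow (gen_word 1 (2 * n - 1)) ?e) ^^ t) x = y"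
    if "x \<in> {1..2 * n}" "y \<in> {1..2 * n}" for x y
    using knot_perm_transitive[OF \<open>1 \<le> k\<close> \<open>k < n\<close>
        braid_perm_knot_word[OF \<open>1 \<le> k\<close> \<open>k < n\<close> e]] that by blast
  moreover have "valid_word (2 * n) (gen_word 1 (2 * k - 1) @ braid_pow (gen_word 1 (2 * n - 1)) ?e)"
    using \<open>k < n\<close> by (auto simp: valid_word_def gen_word_def braid_pow_def braid_inv_def)
  ultimately show ?thesis
    unfolding closure_is_knot_def by blast
qed

end
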